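(* Assume $abcd\neq0$. Let $(\omega_M)_{M\ge1}$ be points of $B_{in}$, let $\theta_M\in(0,\pi)$ be defined by $\cos\theta_M=x(\omega_M)$, and put $\theta'_M=\min\{\theta_M,\pi-\theta_M\}$. If $M\theta'_M\to0$ as $M\to\infty$, then $\displaystyle\lim_{M\to\infty}\frac{\mathcal{E}_M(\omega_M)}{M}=\frac23$.
   Context: Setting: $C=\begin{bmatrix} a&b\\ c&d\end{bmatrix}$ a fixed $2\times2$ unitary matrix, $\Delta=\det C$, a fixed square root $\Delta^{1/2}$; for each $M\ge1$, $\Gamma_M=\{0,\dots,M-1\}$ and $E_M$ is the linear map on $\ell^2(\Gamma_M;\mathbb{C}^2)$ with $(E_M\varphi)(x)=P\varphi(x+1)+Q\varphi(x-1)$, $\varphi(-1)=\varphi(M)=0$, $P=\begin{bmatrix} a&b\\0&0\end{bmatrix}$, $Q=\begin{bmatrix}0&0\\c&d\end{bmatrix}$. For $\omega$ on the unit circle let $z=\Delta^{1/2}\omega$ and let $\varphi$ be the unique solution of $(z-E_M)\varphi=\delta_0|R\rangle$, $|R\rangle=(0,1)^\top$; the energy is $\mathcal{E}_M(\omega)=\sum_{n=0}^{M-1}\|\varphi(n)\|^2_{\mathbb{C}^2}$. Let $x(\omega)=\frac{\omega+\omega^{-1}}{2|a|}$ and $B_{in}=\{\omega:|\omega|=1,\ |x(\omega)|<1\}$. *)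

theory Defs
  imports "HOL-Analysis.Analysis"
begin

text \<open>A 2x2 complex matrix C = [[a,b],[c,d]] with entries C$1$1 = a, C$1$2 = b,
  C$2$1 = c, C$2$2 = d.\<close>

definition unitary2 :: "complex^2^2 \<Rightarrow> bool" where
  "unitary2 C \<longleftrightarrow> C ** (\<chi> i j. cnj (C $ j $ i)) = mat 1"

definition Pmat :: "complex^2^2 \<Rightarrow> complex^2^2" where
  "Pmat C = (\<chi> i j. if i = 1 then C $ 1 $ j else 0)"

definition Qmat :: "complex^2^2 \<Rightarrow> complex^2^2" where
  "Qmat C = (\<chi> i j. if i = 2 then C $ 2 $ j else 0)"

definition Rvec :: "complex^2" where
  "Rvec = (\<chi> i. if i = 2 then 1 else 0)"

text \<open>Elements of \<open>\<ell>\<^sup>2(\<Gamma>_M; \<complex>\<^sup>2)\<close> are represented by functions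
  \<open>nat \<Rightarrow> complex^2\<close>; only values at \<open>0..M-1\<close> matter. The boundary
  convention \<open>\<phi>(-1) = \<phi>(M) = 0\<close> is built in.\<close>

definition Eop :: "complex^2^2 \<Rightarrow> nat \<Rightarrow> (nat \<Rightarrow> complex^2) \<Rightarrow> nat \<Rightarrow> complex^2" where
  "Eop C M \<phi> x =
     (if x + 1 < M then Pmat C *v \<phi> (x + 1) else 0)
   + (if 0 < x \<and> x - 1 < M then Qmat C *v \<phi> (x - 1) else 0)"

definition solves :: "complex^2^2 \<Rightarrow> nat \<Rightarrow> complex \<Rightarrow> (nat \<Rightarrow> complex^2) \<Rightarrow> bool" where
  "solves C M z \<phi> \<longleftrightarrow>
     (\<forall>x. M \<le> x \<longrightarrow> \<phi> x = 0) \<and>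
     (\<forall>x<M. z *s \<phi> x - Eop C M \<phi> x = (if x = 0 then Rvec else 0))"

definition sol :: "complex^2^2 \<Rightarrow> nat \<Rightarrow> complex \<Rightarrow> nat \<Rightarrow> complex^2" where
  "sol C M z = (THE \<phi>. solves C M z \<phi>)"

text \<open>Energy \<open>\<E>_M(\<omega>)\<close>, with \<open>z = \<Delta>^{1/2} \<omega>\<close> and \<open>sq\<close> the fixed square root of det C.\<close>
definition energy :: "complex^2^2 \<Rightarrow> complex \<Rightarrow> nat \<Rightarrow> complex \<Rightarrow> real" where
  "energy C sq M \<omega> = (\<Sum>n<M. (norm (sol C M (sq * \<omega>) n))\<^sup>2)"

definition xfun :: "complex^2^2 \<Rightarrow> complex \<Rightarrow> complex" where
  "xfun C \<omega> = (\<omega> + inverse \<omega>) / (2 * of_real (cmod (C $ 1 $ 1)))"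

definition B_in :: "complex^2^2 \<Rightarrow> complex set" where
  "B_in C = {\<omega>. cmod \<omega> = 1 \<and> cmod (xfun C \<omega>) < 1}"

end

theory Submission
  imports Defs "HOL-Real_Asymp.Real_Asymp"
begin

(* Solving the resolvent equation backwards from n = M, with rho = |a| and cos theta = x(omega),
   gives phi(n) in closed form through U_k = sin (k theta) / sin theta, and
   E_M(omega) = (sum over k < M of N_k) / D_M, where N_k and D_M are quadratic forms in
   consecutive values of U. Both are invariant under theta -> pi - theta, so one may take
   theta <= pi/2. When M theta -> 0 we have k (1 - (M theta)^2/6) <= U_k <= k for all k <= M,
   hence sum N_k ~ 2 (1 - rho^2) M^3 / 3 and D_M ~ (1 - rho^2) M^2, whose quotient is 2M/3. *)

lemma unitary2_rows:
  assumes "unitary2 C"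
  shows "C$1$1 * cnj (C$1$1) + C$1$2 * cnj (C$1$2) = 1"
    and "C$2$1 * cnj (C$1$1) + C$2$2 * cnj (C$1$2) = 0"
    and "C$2$1 * cnj (C$2$1) + C$2$2 * cnj (C$2$2) = 1"
proof -
  have e: "(C ** (\<chi> i j. cnj (C $ j $ i))) $ i $ j = mat 1 $ i $ j" for i j
    using assms unfolding unitary2_def by simp
  show "C$1$1 * cnj (C$1$1) + C$1$2 * cnj (C$1$2) = 1"
    using e[of 1 1] by (simp add: matrix_matrix_mult_def sum_2 mat_def)
  show "C$2$1 * cnj (C$1$1) + C$2$2 * cnj (C$1$2) = 0"
    using e[of 2 1] by (simp add: matrix_matrix_mult_def sum_2 mat_def)
  show "C$2$1 * cnj (C$2$1) + C$2$2 * cnj (C$2$2) = 1"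
    using e[of 2 2] by (simp add: matrix_matrix_mult_def sum_2 mat_def)
qed

lemma unitary2_second_row:
  assumes "unitary2 C"
  shows "C$2$2 = det C * cnj (C$1$1)" and "C$2$1 = - det C * cnj (C$1$2)"
    and "cmod (det C) = 1"
proof -
  let ?a = "C$1$1" and ?b = "C$1$2" and ?c = "C$2$1" and ?d = "C$2$2"
  note rows = unitary2_rows[OF assms]
  have D: "det C = ?a * ?d - ?b * ?c" by (rule det_2)
  have ca: "?c * cnj ?a = - (?d * cnj ?b)" using rows(2) by (simp add: eq_neg_iff_add_eq_0)
  have "det C * cnj ?a = ?d * (?a * cnj ?a) - ?b * (?c * cnj ?a)"
    unfolding D by (simp add: algebra_simps)
  also have "\<dots> = ?d * (?a * cnj ?a + ?b * cnj ?b)"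
    unfolding ca by (simp add: algebra_simps)
  finally show d: "?d = det C * cnj ?a" using rows(1) by simp
  have "- det C * cnj ?b = - ?a * (?c * cnj ?a + ?d * cnj ?b) + ?c * (?a * cnj ?a + ?b * cnj ?b)"
    unfolding D by (simp add: algebra_simps)
  then show c: "?c = - det C * cnj ?b" using rows(1,2) by simp
  have "det C * cnj (det C) * (?a * cnj ?a + ?b * cnj ?b) = 1"
    using rows(3) unfolding c d by (simp add: algebra_simps)
  then have "complex_of_real ((cmod (det C))^2) = 1"
    using rows(1) by (simp add: complex_norm_square del: of_real_power)
  then have "(cmod (det C))^2 = 1" by (metis of_real_eq_1_iff)
  then show "cmod (det C) = 1" using norm_ge_zero[of "det C"] by (auto simp: power2_eq_1_iff)
qed

lemma unitary2_norm_entries: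
  assumes "unitary2 C" and "C$1$2 \<noteq> 0"
  shows "(cmod (C$1$2))^2 = 1 - (cmod (C$1$1))^2" and "cmod (C$1$1) < 1"
proof -
  have "complex_of_real ((cmod (C$1$2))^2) = complex_of_real (1 - (cmod (C$1$1))^2)"
    using unitary2_rows(1)[OF assms(1)] by (simp add: complex_norm_square algebra_simps del: of_real_power)
  then show n: "(cmod (C$1$2))^2 = 1 - (cmod (C$1$1))^2" by (metis of_real_eq_iff)
  have "0 < (cmod (C$1$2))^2" using assms(2) by simp
  then have "(cmod (C$1$1))^2 < 1" using n by linarith
  then show "cmod (C$1$1) < 1" by (simp add: abs_square_less_1)
qed

text \<open>\<open>chebU t k = U\<^sub>k\<^sub>-\<^sub>1(cos t)\<close>, a Chebyshev polynomial of the second kind.\<close>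

definition chebU :: "real \<Rightarrow> nat \<Rightarrow> real" where
  "chebU t k = sin (real k * t) / sin t"

lemma chebU_0 [simp]: "chebU t 0 = 0"
  by (simp add: chebU_def)

lemma chebU_1: "sin t \<noteq> 0 \<Longrightarrow> chebU t 1 = 1"
  by (simp add: chebU_def)

lemma chebU_Suc_Suc: "chebU t (Suc (Suc k)) = 2 * cos t * chebU t (Suc k) - chebU t k"
proof -
  define A where "A = real (Suc k) * t"
  have shift: "real (Suc (Suc k)) * t = A + t" "real k * t = A - t"
    by (simp_all add: A_def algebra_simps)
  have "sin (A + t) + sin (A - t) = 2 * cos t * sin A"
    by (simp only: sin_add sin_diff) (simp add: algebra_simps)
  then have "sin (real (Suc (Suc k)) * t) = 2 * cos t * sin (real (Suc k) * t) - sin (real k * t)"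
    unfolding shift A_def[symmetric] by linarith
  then show ?thesis by (simp add: chebU_def diff_divide_distrib)
qed

lemma chebU_pi_minus: "chebU (pi - t) k = - ((-1)^k * chebU t k)"
proof -
  have "sin (real k * (pi - t)) = sin (real k * pi - real k * t)" by (simp add: algebra_simps)
  also have "\<dots> = - ((-1)^k * sin (real k * t))"
    by (simp only: sin_diff sin_npi cos_npi mult_zero_left diff_0)
  finally show ?thesis by (simp add: chebU_def)
qed

lemma abs_sin_real_mult_le: "\<bar>sin (real k * t)\<bar> \<le> real k * \<bar>sin t\<bar>"
proof (induction k)
  case (Suc k)
  have "sin (real (Suc k) * t) = sin (real k * t) * cos t + cos (real k * t) * sin t"
    by (simp add: distrib_right sin_add)
  then have "\<bar>sin (real (Suc k) * t)\<bar>
      \<le> \<bar>sin (real k * t)\<bar> * \<bar>cos t\<bar> + \<bar>cos (real k * t)\<bar> * \<bar>sin t\<bar>"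
    by (metis abs_mult abs_triangle_ineq)
  also have "\<dots> \<le> \<bar>sin (real k * t)\<bar> + \<bar>sin t\<bar>"
    by (intro add_mono) (auto intro: mult_left_le mult_left_le_one_le simp: abs_cos_le_one abs_mult)
  also have "\<dots> \<le> real (Suc k) * \<bar>sin t\<bar>" using Suc.IH by (simp add: algebra_simps)
  finally show ?case .
qed simp

lemma sin_ge_cubic: "0 \<le> (y::real) \<Longrightarrow> y - y^3 / 6 \<le> sin y"
proof -
  assume y: "0 \<le> y"
  have "\<bar>sin y - (\<Sum>m<3. sin_coeff m * y ^ m)\<bar> \<le> inverse (fact 3) * \<bar>y\<bar> ^ 3"
    by (rule Maclaurin_sin_bound)
  moreover have "(\<Sum>m<3. sin_coeff m * y ^ m) = y"
    by (simp add: lessThan_nat_numeral sin_coeff_def)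
  moreover have "inverse (fact 3) * \<bar>y\<bar> ^ 3 = y^3 / (6::real)"
    using y by (simp add: eval_nat_numeral)
  ultimately show ?thesis by linarith
qed

lemma chebU_linear_bounds:
  assumes t: "0 < t" "t < pi" and "k \<le> M" and Mt: "real M * t \<le> 1"
  shows "real k * (1 - (real M * t)^2 / 6) \<le> chebU t k" and "chebU t k \<le> real k"
proof -
  have s: "0 < sin t" using t by (simp add: sin_gt_zero)
  show "chebU t k \<le> real k"
    using abs_sin_real_mult_le[of k t] s by (simp add: chebU_def divide_le_eq)
  let ?y = "real k * t"
  have yM: "?y \<le> real M * t" using t \<open>k \<le> M\<close> by (simp add: mult_right_mono)
  then have y: "0 \<le> ?y" "?y \<le> 1" using t Mt by (simp, linarith)
  have "?y^2 \<le> (real M * t)^2" using y yM by (simp add: power_mono)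
  then have "real k * (1 - (real M * t)^2 / 6) \<le> real k * (1 - ?y^2 / 6)"
    by (simp add: mult_left_mono)
  also have "\<dots> = (?y - ?y^3/6) / t" using t
    by (simp add: field_simps power2_eq_square power3_eq_cube)
  also have "\<dots> \<le> sin ?y / t" using sin_ge_cubic[OF y(1)] t by (simp add: divide_right_mono)
  also have "\<dots> \<le> sin ?y / sin t"
  proof (rule divide_left_mono)
    have "?y^3 \<le> ?y * 1" using y
      by (metis power3_eq_cube mult.assoc mult_left_mono mult_le_one zero_le_mult_iff)
    then show "0 \<le> sin ?y" using sin_ge_cubic[OF y(1)] y by linarith
  qed (use s t sin_x_le_x in auto)
  finally show "real k * (1 - (real M * t)^2 / 6) \<le> chebU t k" unfolding chebU_def .
qed

definition numer_form :: "real \<Rightarrow> real \<Rightarrow> nat \<Rightarrow> real" where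
  "numer_form \<rho> t k =
     (chebU t k)^2 + (chebU t (Suc k))^2 - 2 * \<rho>^2 * cos t * chebU t k * chebU t (Suc k)"

definition denom_form :: "real \<Rightarrow> real \<Rightarrow> nat \<Rightarrow> real" where
  "denom_form \<rho> t M =
     (chebU t M)^2 + \<rho>^2 * (chebU t (M-1))^2 - 2 * \<rho>^2 * cos t * chebU t M * chebU t (M-1)"

lemma chebU_pi_minus_sq: "(chebU (pi - t) k)^2 = (chebU t k)^2"
  by (cases "even k") (simp_all add: chebU_pi_minus power_mult_distrib)

lemma chebU_pi_minus_mult_Suc:
  "chebU (pi - t) k * chebU (pi - t) (Suc k) = - (chebU t k * chebU t (Suc k))"
  unfolding chebU_pi_minus by (cases "even k") simp_all

lemma numer_form_pi_minus: "numer_form \<rho> (pi - t) k = numer_form \<rho> t k"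
  using chebU_pi_minus_mult_Suc[of t k]
  by (simp add: numer_form_def chebU_pi_minus_sq mult.assoc)

lemma denom_form_pi_minus: "denom_form \<rho> (pi - t) M = denom_form \<rho> t M"
proof (cases M)
  case (Suc m)
  then show ?thesis using chebU_pi_minus_mult_Suc[of t m]
    by (simp add: denom_form_def chebU_pi_minus_sq mult.assoc mult.commute[of "chebU _ (Suc m)"])
qed (simp add: denom_form_def)

lemma Eop_components:
  "(Eop C M \<psi> x)$1 = (if x + 1 < M then C$1$1 * \<psi> (x+1)$1 + C$1$2 * \<psi> (x+1)$2 else 0)"
  "(Eop C M \<psi> x)$2 = (if 0 < x \<and> x - 1 < M then C$2$1 * \<psi> (x-1)$1 + C$2$2 * \<psi> (x-1)$2 else 0)"
  by (auto simp: Eop_def Pmat_def Qmat_def matrix_vector_mult_def sum_2)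

lemma solves_iff:
  "solves C M z \<psi> \<longleftrightarrow> (\<forall>x. M \<le> x \<longrightarrow> \<psi> x = 0) \<and>
     (\<forall>n<M. z * \<psi> n $ 1 = (if n + 1 < M then C$1$1 * \<psi> (n+1)$1 + C$1$2 * \<psi> (n+1)$2 else 0) \<and>
      z * \<psi> n $ 2 = (if 0 < n then C$2$1 * \<psi> (n-1)$1 + C$2$2 * \<psi> (n-1)$2 else 1))"
proof -
  have "(z *s \<psi> n - Eop C M \<psi> n = (if n = 0 then Rvec else 0)) \<longleftrightarrow>
     (z * \<psi> n $ 1 = (if n + 1 < M then C$1$1 * \<psi> (n+1)$1 + C$1$2 * \<psi> (n+1)$2 else 0) \<and>
      z * \<psi> n $ 2 = (if 0 < n then C$2$1 * \<psi> (n-1)$1 + C$2$2 * \<psi> (n-1)$2 else 1))"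
    if "n < M" for n
    using that less_imp_diff_less[OF that, of 1] unfolding vec_eq_iff forall_2
    by (cases "n + 1 < M"; cases "n = 0"; simp add: Eop_components Rvec_def)
  then show ?thesis unfolding solves_def by blast
qed

lemma norm_vec2_sq: "(norm (v::complex^2))^2 = (cmod (v$1))^2 + (cmod (v$2))^2"
  unfolding norm_vec_def L2_set_def sum_2 by simp

lemma backward_recursion_unique:
  fixes a b c d z :: complex and \<psi> \<phi> :: "nat \<Rightarrow> complex^2"
  assumes z: "z \<noteq> 0" and d: "d \<noteq> 0" and M: "0 < M"
    and \<psi>1: "\<forall>n<M. z * \<psi> n $ 1 = (if n + 1 < M then a * \<psi> (n+1)$1 + b * \<psi> (n+1)$2 else 0)"
    and \<phi>1: "\<forall>n<M. z * \<phi> n $ 1 = (if n + 1 < M then a * \<phi> (n+1)$1 + b * \<phi> (n+1)$2 else 0)"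
    and \<psi>2: "\<forall>n. 0 < n \<and> n < M \<longrightarrow> z * \<psi> n $ 2 = c * \<psi> (n-1)$1 + d * \<psi> (n-1)$2"
    and \<phi>2: "\<forall>n. 0 < n \<and> n < M \<longrightarrow> z * \<phi> n $ 2 = c * \<phi> (n-1)$1 + d * \<phi> (n-1)$2"
    and last: "\<psi> (M-1) $ 2 = \<phi> (M-1) $ 2"
  shows "\<forall>n<M. \<psi> n = \<phi> n"
proof -
  have "k < M \<longrightarrow> \<psi> (M-1-k) = \<phi> (M-1-k)" for k
  proof (induction k)
    case 0
    have "z * \<psi> (M-1) $ 1 = 0" "z * \<phi> (M-1) $ 1 = 0"
      using \<psi>1 \<phi>1 M by (auto elim!: allE[of _ "M-1"])
    then show ?case using z last by (simp add: vec_eq_iff forall_2)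
  next
    case (Suc k)
    show ?case
    proof
      assume k: "Suc k < M"
      define n where "n = M - 1 - Suc k"
      have n: "n + 1 = M - 1 - k" "n + 1 < M" "n < M" using k by (auto simp: n_def)
      have IH: "\<psi> (n+1) = \<phi> (n+1)" using Suc.IH k n by simp
      have "z * \<psi> n $ 1 = z * \<phi> n $ 1" using \<psi>1 \<phi>1 n IH by auto
      then have first: "\<psi> n $ 1 = \<phi> n $ 1" using z by simp
      have "z * \<psi> (n+1) $ 2 = c * \<psi> n $1 + d * \<psi> n $ 2"
        "z * \<phi> (n+1) $ 2 = c * \<phi> n $1 + d * \<phi> n $ 2"
        using \<psi>2[rule_format, of "n+1"] \<phi>2[rule_format, of "n+1"] n by simp_all
      then have "d * \<psi> n $ 2 = d * \<phi> n $ 2" using IH first by (metis add_left_cancel)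
      then have "\<psi> n $ 2 = \<phi> n $ 2" using d by simp
      then show "\<psi> (M - 1 - Suc k) = \<phi> (M - 1 - Suc k)"
        using first by (simp add: vec_eq_iff forall_2 n_def)
    qed
  qed
  note backward = this
  show ?thesis
  proof (intro allI impI)
    fix n assume "n < M"
    then show "\<psi> n = \<phi> n" using backward[of "M - 1 - n"] by simp
  qed
qed

locale energy_setting =
  fixes C :: "complex^2^2" and sq \<omega> :: complex and \<theta> :: real
  assumes unitary: "unitary2 C" and sqrt: "sq\<^sup>2 = det C"
    and nonzero: "C$1$1 * C$1$2 * C$2$1 * C$2$2 \<noteq> 0"
    and norm_omega: "cmod \<omega> = 1" and cos_theta: "complex_of_real (cos \<theta>) = xfun C \<omega>"
    and sin_theta: "sin \<theta> \<noteq> 0"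
begin

abbreviation "a \<equiv> C$1$1"
abbreviation "b \<equiv> C$1$2"
abbreviation "c \<equiv> C$2$1"
abbreviation "d \<equiv> C$2$2"

definition "rho = cmod a"
definition "lam = sq * cnj a / of_real rho"
definition "z = sq * \<omega>"

lemma entries_nonzero: "a \<noteq> 0" "b \<noteq> 0" "c \<noteq> 0" "d \<noteq> 0"
  using nonzero by auto

lemma rho_pos: "0 < rho"
  using entries_nonzero by (simp add: rho_def)

lemma norm_b_sq: "(cmod b)^2 = 1 - rho^2"
  using unitary2_norm_entries(1)[OF unitary entries_nonzero(2)] by (simp add: rho_def)

lemma a_mult_cnj: "a * cnj a = of_real (rho^2)"
  by (metis complex_norm_square rho_def)

lemma b_mult_cnj: "b * cnj b = 1 - of_real (rho^2)"
  using unitary2_rows(1)[OF unitary] a_mult_cnj by (simp add: algebra_simps)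

lemma norm_sq: "cmod sq = 1"
proof -
  have "(cmod sq)^2 = 1"
    using sqrt unitary2_second_row(3)[OF unitary] by (simp flip: norm_power)
  then show ?thesis using norm_ge_zero[of sq] by (auto simp: power2_eq_1_iff)
qed

lemma norm_z: "cmod z = 1"
  using norm_sq norm_omega by (simp add: z_def norm_mult)

lemma z_nonzero: "z \<noteq> 0"
  using norm_z by auto

lemma norm_lam: "cmod lam = 1"
  using norm_sq rho_pos by (simp add: lam_def norm_mult norm_divide rho_def)

lemma lam_mult_a: "lam * a = sq * of_real rho"
proof -
  have "lam * a = sq * (a * cnj a) / of_real rho" by (simp add: lam_def algebra_simps)
  then show ?thesis using rho_pos by (simp add: a_mult_cnj power2_eq_square)
qed

lemma omega_plus_inverse: "\<omega> + inverse \<omega> = 2 * of_real rho * of_real (cos \<theta>)"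
  using cos_theta rho_pos by (simp add: xfun_def rho_def field_simps)

lemma omega_quadratic: "2 * of_real rho * of_real (cos \<theta>) * \<omega> = \<omega>^2 + 1"
proof -
  note omega_plus_inverse
  moreover have "(\<omega> + inverse \<omega>) * \<omega> = \<omega>^2 + 1"
    using norm_omega by (auto simp: field_simps power2_eq_square)
  ultimately show ?thesis by simp
qed

lemma norm_combination_sq:
  "(cmod (\<omega> * of_real u - of_real (rho * w)))^2 = u^2 + rho^2 * w^2 - 2 * rho^2 * cos \<theta> * u * w"
proof -
  have unit: "(Re \<omega>)^2 + (Im \<omega>)^2 = 1" using norm_omega cmod_power2[of \<omega>] by simp
  have "Re (\<omega> + inverse \<omega>) = 2 * rho * cos \<theta>"
    using omega_plus_inverse by simp
  moreover have "Re (inverse \<omega>) = Re \<omega>" using unit by (simp add: power2_eq_square)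
  ultimately have Re: "Re \<omega> = rho * cos \<theta>" by simp
  have "(cmod (\<omega> * of_real u - of_real (rho * w)))^2 = (Re \<omega> * u - rho * w)^2 + (Im \<omega> * u)^2"
    by (simp add: cmod_power2)
  also have "\<dots> = ((Re \<omega>)^2 + (Im \<omega>)^2) * u^2 - 2 * rho * Re \<omega> * u * w + rho^2 * w^2"
    by (simp add: algebra_simps power2_eq_square)
  also have "\<dots> = u^2 - 2 * rho * Re \<omega> * u * w + rho^2 * w^2"
    by (simp only: unit mult_1)
  also have "\<dots> = u^2 + rho^2 * w^2 - 2 * rho^2 * cos \<theta> * u * w"
    unfolding Re by (simp add: algebra_simps power2_eq_square)
  finally show ?thesis .
qed

text \<open>Propagating the equations backwards from \<open>\<phi> M = 0\<close> gives, up to the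
  constant \<open>K\<close>, the following ansatz; the equation at \<open>n = 0\<close> then fixes \<open>K\<close>.\<close>

definition ansatz :: "nat \<Rightarrow> complex \<Rightarrow> nat \<Rightarrow> complex^2" where
  "ansatz M K n = vector [K * lam^n * b * of_real rho * of_real (chebU \<theta> (M-1-n)),
      K * lam^n * a * (\<omega> * of_real (chebU \<theta> (M-n)) - of_real (rho * chebU \<theta> (M-1-n)))]"

lemma ansatz_first_row:
  assumes "n < M"
  shows "z * ansatz M K n $ 1 =
    (if n + 1 < M then a * ansatz M K (n+1) $ 1 + b * ansatz M K (n+1) $ 2 else 0)"
proof (cases "n + 1 < M")
  case True
  define j where "j = M - 2 - n"
  have j: "M - 1 - n = Suc j" "M - 1 - (n+1) = j" "M - (n+1) = Suc j"
    using True unfolding j_def by arith+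
  let ?V = "of_real (chebU \<theta> (Suc j)) :: complex" and ?W = "of_real (chebU \<theta> j) :: complex"
  have "a * ansatz M K (n+1) $ 1 + b * ansatz M K (n+1) $ 2
      = a * (K * lam^(n+1) * b * of_real rho * ?W)
        + b * (K * lam^(n+1) * a * (\<omega> * ?V - of_real rho * ?W))"
    unfolding ansatz_def j by simp
  also have "\<dots> = K * lam^n * (lam * a) * b * \<omega> * ?V" by (simp add: algebra_simps)
  also have "\<dots> = z * ansatz M K n $ 1"
    unfolding ansatz_def j lam_mult_a z_def by (simp add: algebra_simps)
  finally show ?thesis using True by simp
qed (use assms in \<open>simp add: ansatz_def\<close>)

lemma ansatz_second_row:
  assumes "0 < n" "n < M"
  shows "z * ansatz M K n $ 2 = c * ansatz M K (n-1) $ 1 + d * ansatz M K (n-1) $ 2"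
proof -
  obtain m where m: "n = Suc m" using assms by (cases n) auto
  define k where "k = M - 1 - n"
  have k: "M - 1 - n = k" "M - n = Suc k" "M - Suc m = Suc k" "M - m = Suc (Suc k)"
    using assms m unfolding k_def by arith+
  let ?V0 = "of_real (chebU \<theta> k) :: complex" and ?V1 = "of_real (chebU \<theta> (Suc k)) :: complex"
    and ?r = "of_real rho :: complex" and ?ct = "of_real (cos \<theta>) :: complex"
  have "z * lam * a = sq * \<omega> * (lam * a)" by (simp add: z_def algebra_simps)
  also have "\<dots> = sq^2 * \<omega> * ?r" unfolding lam_mult_a by (simp add: power2_eq_square algebra_simps)
  finally have zla: "z * lam * a = det C * \<omega> * ?r" using sqrt by simp
  have "c * b = - det C * (b * cnj b)"
    by (subst unitary2_second_row(2)[OF unitary]) (simp add: algebra_simps)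
  then have cb: "c * b = - det C * (1 - ?r^2)" unfolding b_mult_cnj by simp
  have da: "d * a = det C * ?r^2"
    using a_mult_cnj by (subst unitary2_second_row(1)[OF unitary]) (simp add: algebra_simps)
  \<comment> \<open>the recursion of \<open>chebU\<close> enters through \<open>\<omega>\<^sup>2 + 1 = 2 \<rho> cos \<theta> \<omega>\<close>\<close>
  have key: "\<omega> * ?r * (\<omega> * ?V1 - ?r * ?V0) =
      - (1 - ?r^2) * ?r * ?V1 + ?r^2 * (\<omega> * (2 * ?ct * ?V1 - ?V0) - ?r * ?V1)"
  proof -
    have "- (1 - ?r^2) * ?r * ?V1 + ?r^2 * (\<omega> * (2 * ?ct * ?V1 - ?V0) - ?r * ?V1)
        - \<omega> * ?r * (\<omega> * ?V1 - ?r * ?V0) = ?r * ?V1 * (2 * ?r * ?ct * \<omega> - (\<omega>^2 + 1))"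
      by (simp add: algebra_simps power2_eq_square)
    then show ?thesis using omega_quadratic by simp
  qed
  have "z * ansatz M K n $ 2 = K * lam^m * (z * lam * a) * (\<omega> * ?V1 - ?r * ?V0)"
    unfolding ansatz_def m k[unfolded m] by (simp add: algebra_simps)
  also have "\<dots> = K * lam^m * det C * (\<omega> * ?r * (\<omega> * ?V1 - ?r * ?V0))"
    unfolding zla by (simp add: algebra_simps)
  also have "\<dots> = K * lam^m * ((c * b) * ?r * ?V1
      + (d * a) * (\<omega> * of_real (chebU \<theta> (Suc (Suc k))) - ?r * ?V1))"
    unfolding key cb da chebU_Suc_Suc by (simp add: algebra_simps)
  also have "\<dots> = c * ansatz M K (n-1) $ 1 + d * ansatz M K (n-1) $ 2"
    unfolding ansatz_def m by (simp add: k(3,4) algebra_simps)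
  finally show ?thesis .
qed

definition "boundary M = \<omega> * of_real (chebU \<theta> M) - of_real (rho * chebU \<theta> (M-1))"
definition "norm_const M = 1 / (z * a * boundary M)"
definition "solution M n = (if n < M then ansatz M (norm_const M) n else 0)"

lemma norm_boundary_sq: "(cmod (boundary M))^2 = denom_form rho \<theta> M"
  unfolding boundary_def denom_form_def norm_combination_sq by simp

lemma boundary_nonzero: "0 < denom_form rho \<theta> M \<Longrightarrow> boundary M \<noteq> 0"
  using norm_boundary_sq[of M] by auto

lemma ansatz_0_second: "0 < M \<Longrightarrow> ansatz M K 0 $ 2 = K * a * boundary M"
  by (simp add: ansatz_def boundary_def algebra_simps)

lemma ansatz_last_second: "0 < M \<Longrightarrow> ansatz M K (M-1) $ 2 = K * lam^(M-1) * a * \<omega>"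
  using chebU_1[OF sin_theta] by (cases M) (simp_all add: ansatz_def)

lemma solution_solves:
  assumes M: "0 < M" and D: "0 < denom_form rho \<theta> M"
  shows "solves C M z (solution M)"
  unfolding solves_iff
proof (intro conjI allI impI)
  fix n assume n: "n < M"
  show "z * solution M n $ 1 =
      (if n + 1 < M then a * solution M (n+1) $ 1 + b * solution M (n+1) $ 2 else 0)"
    using ansatz_first_row[OF n] n by (simp add: solution_def)
  show "z * solution M n $ 2 =
      (if 0 < n then c * solution M (n-1) $ 1 + d * solution M (n-1) $ 2 else 1)"
  proof (cases "0 < n")
    case True
    then show ?thesis using ansatz_second_row[OF True n] n by (simp add: solution_def)
  next
    case False
    then show ?thesis using ansatz_0_second[OF M] M boundary_nonzero[OF D] z_nonzero entries_nonzero
      by (auto simp: solution_def norm_const_def)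
  qed
qed (simp add: solution_def)

lemma sol_eq_solution:
  assumes M: "0 < M" and D: "0 < denom_form rho \<theta> M"
  shows "sol C M z = solution M"
  unfolding sol_def
proof (rule the_equality)
  show "solves C M z (solution M)" by (rule solution_solves[OF M D])
next
  fix \<psi> assume "solves C M z \<psi>"
  note eqs = this[unfolded solves_iff]
  define K where "K = \<psi> (M-1) $ 2 / (lam^(M-1) * a * \<omega>)"
  have "lam \<noteq> 0" "\<omega> \<noteq> 0" using norm_lam norm_omega by auto
  then have last: "\<psi> (M-1) $ 2 = ansatz M K (M-1) $ 2"
    using ansatz_last_second[OF M, of K] entries_nonzero by (simp add: K_def)
  have agree: "\<forall>n<M. \<psi> n = ansatz M K n"
    by (rule backward_recursion_unique[where a=a and b=b and c=c, OF z_nonzero entries_nonzero(4) M])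
      (use eqs ansatz_first_row ansatz_second_row last in auto)
  have "z * \<psi> 0 $ 2 = 1" using eqs M by auto
  then have "z * K * a * boundary M = 1" using agree M ansatz_0_second[OF M, of K] by (simp add: mult.assoc)
  then have "K = norm_const M"
    using boundary_nonzero[OF D] z_nonzero entries_nonzero by (auto simp: norm_const_def field_simps)
  then show "\<psi> = solution M"
    using agree eqs by (auto simp: solution_def fun_eq_iff not_less)
qed

lemma norm_solution_sq:
  assumes n: "n < M" and D: "0 < denom_form rho \<theta> M"
  shows "(norm (solution M n))^2 = numer_form rho \<theta> (M-1-n) / denom_form rho \<theta> M"
proof -
  define k where "k = M - 1 - n"
  have k: "M - n = Suc k" using n by (simp add: k_def)
  have lam_n: "cmod (lam^n) = 1" using norm_lam by (simp add: norm_power)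
  have "cmod (norm_const M) = 1 / (rho * cmod (boundary M))"
    using norm_z by (simp add: norm_const_def norm_divide norm_mult rho_def)
  then have K: "(cmod (norm_const M))^2 = 1 / (rho^2 * denom_form rho \<theta> M)"
    by (simp add: power_divide power_mult_distrib norm_boundary_sq)
  have norm_a: "cmod a = rho" by (simp add: rho_def)
  have first: "(cmod (solution M n $ 1))^2 = (cmod (norm_const M))^2 * (1 - rho^2) * rho^2 * (chebU \<theta> k)^2"
    unfolding solution_def ansatz_def k_def[symmetric] using n rho_pos
    by (simp add: norm_mult lam_n power_mult_distrib norm_b_sq)
  have second: "(cmod (solution M n $ 2))^2 = (cmod (norm_const M))^2 * rho^2 *
      ((chebU \<theta> (Suc k))^2 + rho^2 * (chebU \<theta> k)^2
        - 2 * rho^2 * cos \<theta> * chebU \<theta> (Suc k) * chebU \<theta> k)"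
    unfolding solution_def ansatz_def k_def[symmetric] k using n norm_combination_sq
    by (simp add: norm_mult lam_n power_mult_distrib norm_a)
  have "(norm (solution M n))^2 = (cmod (norm_const M))^2 * rho^2 * numer_form rho \<theta> k"
    unfolding norm_vec2_sq first second numer_form_def by (simp add: algebra_simps)
  also have "\<dots> = numer_form rho \<theta> k / denom_form rho \<theta> M"
    using rho_pos unfolding K by simp
  finally show ?thesis by (simp add: k_def)
qed

lemma energy_eq:
  assumes M: "0 < M" and D: "0 < denom_form rho \<theta> M"
  shows "energy C sq M \<omega> = (\<Sum>k<M. numer_form rho \<theta> k) / denom_form rho \<theta> M"
proof -
  have "energy C sq M \<omega> = (\<Sum>n<M. numer_form rho \<theta> (M-1-n) / denom_form rho \<theta> M)"
    unfolding energy_def z_def[symmetric] sol_eq_solution[OF M D]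
    by (rule sum.cong) (simp_all add: norm_solution_sq[OF _ D])
  also have "\<dots> = (\<Sum>k<M. numer_form rho \<theta> k / denom_form rho \<theta> M)"
    by (rule sum.reindex_bij_witness[where i="\<lambda>k. M - 1 - k" and j="\<lambda>k. M - 1 - k"]) auto
  finally show ?thesis by (simp add: sum_divide_distrib)
qed

end

lemma energy_formula:
  assumes "unitary2 C" and "sq\<^sup>2 = det C" and "C$1$1 * C$1$2 * C$2$1 * C$2$2 \<noteq> 0"
    and "cmod \<omega> = 1" and "complex_of_real (cos \<theta>) = xfun C \<omega>" and "0 < \<theta>" "\<theta> < pi"
    and "0 < M" and "0 < denom_form (cmod (C$1$1)) \<theta> M"
  shows "energy C sq M \<omega> =
    (\<Sum>k<M. numer_form (cmod (C$1$1)) \<theta> k) / denom_form (cmod (C$1$1)) \<theta> M"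
proof -
  interpret energy_setting C sq \<omega> \<theta>
    using assms sin_gt_zero[of \<theta>] by unfold_locales auto
  show ?thesis using energy_eq assms(8,9) by (simp add: rho_def)
qed

lemma quadratic_form_bounds:
  fixes v w p q \<alpha> r e :: real
  assumes "0 \<le> e" "e \<le> 1" "0 \<le> r" "0 \<le> \<alpha>" "0 \<le> p" "0 \<le> q"
    and v: "p * (1 - e) \<le> v" "v \<le> p" and w: "q * (1 - e) \<le> w" "w \<le> q"
  shows "(1 - e)^2 * (p^2 + \<alpha> * q^2) - 2 * r * p * q \<le> v^2 + \<alpha> * w^2 - 2 * r * v * w"
    and "v^2 + \<alpha> * w^2 - 2 * r * v * w \<le> p^2 + \<alpha> * q^2 - 2 * r * (1 - e)^2 * p * q"
proof -
  have low: "0 \<le> p * (1 - e)" "0 \<le> q * (1 - e)" using assms by simp_all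
  have "0 \<le> v" "0 \<le> w" using low v w by linarith+
  then have sq: "(p * (1 - e))^2 \<le> v^2" "v^2 \<le> p^2" "(q * (1 - e))^2 \<le> w^2" "w^2 \<le> q^2"
    using low v w by (simp_all add: power_mono)
  have "(p * (1 - e)) * (q * (1 - e)) \<le> v * w" "v * w \<le> p * q"
    using low v w \<open>0 \<le> v\<close> \<open>0 \<le> w\<close> by (intro mult_mono; simp)+
  then have prod: "r * ((p * (1 - e)) * (q * (1 - e))) \<le> r * (v * w)" "r * (v * w) \<le> r * (p * q)"
    using assms(3) by (simp_all add: mult_left_mono)
  have "\<alpha> * (q * (1 - e))^2 \<le> \<alpha> * w^2" "\<alpha> * w^2 \<le> \<alpha> * q^2"
    using sq assms(4) by (simp_all add: mult_left_mono)
  moreover have "(1 - e)^2 * (p^2 + \<alpha> * q^2) = (p * (1 - e))^2 + \<alpha> * (q * (1 - e))^2"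
    and "2 * r * (1 - e)^2 * p * q = 2 * (r * ((p * (1 - e)) * (q * (1 - e))))"
    and "2 * r * v * w = 2 * (r * (v * w))" and "2 * r * p * q = 2 * (r * (p * q))"
    by (simp_all add: power2_eq_square algebra_simps)
  ultimately show "(1 - e)^2 * (p^2 + \<alpha> * q^2) - 2 * r * p * q \<le> v^2 + \<alpha> * w^2 - 2 * r * v * w"
    and "v^2 + \<alpha> * w^2 - 2 * r * v * w \<le> p^2 + \<alpha> * q^2 - 2 * r * (1 - e)^2 * p * q"
    using sq prod by linarith+
qed

lemma sum_squares_consecutive:
  "(\<Sum>k<M. (real k)^2 + (1 + real k)^2) = real M * (2 * (real M)^2 + 1) / 3"
  by (induction M) (simp_all add: power2_eq_square algebra_simps add_divide_distrib)

lemma sum_products_consecutive: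
  "(\<Sum>k<M. real k * (1 + real k)) = (real M - 1) * real M * (real M + 1) / 3"
  by (induction M) (simp_all add: algebra_simps add_divide_distrib)

lemma numer_form_sum_bounds:
  fixes \<rho> t :: real
  assumes t: "0 < t" "t \<le> pi/2" and Mt: "real M * t \<le> 1"
  defines "e \<equiv> (real M * t)^2 / 6" and "r \<equiv> \<rho>^2 * cos t"
  shows "(1 - e)^2 * (real M * (2 * (real M)^2 + 1) / 3)
           - 2 * r * ((real M - 1) * real M * (real M + 1) / 3) \<le> (\<Sum>k<M. numer_form \<rho> t k)"
    and "(\<Sum>k<M. numer_form \<rho> t k) \<le> real M * (2 * (real M)^2 + 1) / 3
           - 2 * r * (1 - e)^2 * ((real M - 1) * real M * (real M + 1) / 3)"
proof -
  have "(real M * t)^2 \<le> 1" using Mt t by (simp add: power_le_one)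
  then have e: "0 \<le> e" "e \<le> 1" by (simp_all add: e_def)
  have r: "0 \<le> r" using t by (simp add: r_def cos_ge_zero)
  have "t < pi" using t pi_gt_zero by linarith
  note U = chebU_linear_bounds[OF t(1) this _ Mt, folded e_def]
  have bounds:
    "(1 - e)^2 * ((real k)^2 + (1 + real k)^2) - 2 * r * (real k * (1 + real k)) \<le> numer_form \<rho> t k"
    "numer_form \<rho> t k \<le> (real k)^2 + (1 + real k)^2 - 2 * r * (1 - e)^2 * (real k * (1 + real k))"
    if "k < M" for k
  proof -
    have "numer_form \<rho> t k = (chebU t k)^2 + 1 * (chebU t (Suc k))^2 - 2 * r * chebU t k * chebU t (Suc k)"
      by (simp add: numer_form_def r_def)
    moreover note quadratic_form_bounds[OF e r zero_le_one of_nat_0_le_iff of_nat_0_le_iff,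
        OF U(1)[of k] U(2)[of k] U(1)[of "Suc k"] U(2)[of "Suc k"]]
    ultimately show
      "(1 - e)^2 * ((real k)^2 + (1 + real k)^2) - 2 * r * (real k * (1 + real k)) \<le> numer_form \<rho> t k"
      "numer_form \<rho> t k \<le> (real k)^2 + (1 + real k)^2 - 2 * r * (1 - e)^2 * (real k * (1 + real k))"
      using that by (simp_all add: mult.assoc)
  qed
  have "(1 - e)^2 * (real M * (2 * (real M)^2 + 1) / 3)
      - 2 * r * ((real M - 1) * real M * (real M + 1) / 3)
      = (\<Sum>k<M. (1 - e)^2 * ((real k)^2 + (1 + real k)^2) - 2 * r * (real k * (1 + real k)))"
    by (simp add: sum_subtractf sum_distrib_left[symmetric] sum_squares_consecutive
        sum_products_consecutive)
  also have "\<dots> \<le> (\<Sum>k<M. numer_form \<rho> t k)"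
    by (intro sum_mono bounds(1)) simp
  finally show "(1 - e)^2 * (real M * (2 * (real M)^2 + 1) / 3)
      - 2 * r * ((real M - 1) * real M * (real M + 1) / 3) \<le> (\<Sum>k<M. numer_form \<rho> t k)" .
  have "(\<Sum>k<M. numer_form \<rho> t k)
      \<le> (\<Sum>k<M. (real k)^2 + (1 + real k)^2 - 2 * r * (1 - e)^2 * (real k * (1 + real k)))"
    by (intro sum_mono bounds(2)) simp
  also have "\<dots> = real M * (2 * (real M)^2 + 1) / 3
      - 2 * r * (1 - e)^2 * ((real M - 1) * real M * (real M + 1) / 3)"
    by (simp add: sum_subtractf sum_distrib_left[symmetric] sum_squares_consecutive
        sum_products_consecutive)
  finally show "(\<Sum>k<M. numer_form \<rho> t k) \<le> real M * (2 * (real M)^2 + 1) / 3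
      - 2 * r * (1 - e)^2 * ((real M - 1) * real M * (real M + 1) / 3)" .
qed

lemma denom_form_bounds:
  fixes \<rho> t :: real
  assumes M: "0 < M" and t: "0 < t" "t \<le> pi/2" and Mt: "real M * t \<le> 1"
  defines "e \<equiv> (real M * t)^2 / 6" and "r \<equiv> \<rho>^2 * cos t"
  shows "(1 - e)^2 * ((real M)^2 + \<rho>^2 * (real M - 1)^2) - 2 * r * (real M * (real M - 1))
           \<le> denom_form \<rho> t M"
    and "denom_form \<rho> t M
           \<le> (real M)^2 + \<rho>^2 * (real M - 1)^2 - 2 * r * (1 - e)^2 * (real M * (real M - 1))"
proof -
  have "(real M * t)^2 \<le> 1" using Mt t by (simp add: power_le_one)
  then have e: "0 \<le> e" "e \<le> 1" by (simp_all add: e_def)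
  have r: "0 \<le> r" using t by (simp add: r_def cos_ge_zero)
  have "t < pi" using t pi_gt_zero by linarith
  note U = chebU_linear_bounds[OF t(1) this _ Mt, folded e_def]
  have "denom_form \<rho> t M = (chebU t M)^2 + \<rho>^2 * (chebU t (M-1))^2 - 2 * r * chebU t M * chebU t (M-1)"
    by (simp add: denom_form_def r_def)
  moreover have "real (M - 1) = real M - 1" using M by simp
  moreover note quadratic_form_bounds[OF e r zero_le_power2 of_nat_0_le_iff of_nat_0_le_iff,
      OF U(1)[of M] U(2)[of M] U(1)[of "M-1"] U(2)[of "M-1"]]
  ultimately show
    "(1 - e)^2 * ((real M)^2 + \<rho>^2 * (real M - 1)^2) - 2 * r * (real M * (real M - 1))
       \<le> denom_form \<rho> t M"
    "denom_form \<rho> t M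
       \<le> (real M)^2 + \<rho>^2 * (real M - 1)^2 - 2 * r * (1 - e)^2 * (real M * (real M - 1))"
    by (simp_all add: mult.assoc)
qed

lemma tendsto_perturbed_form:
  fixes X A B s e r :: "nat \<Rightarrow> real"
  assumes bounds: "\<forall>\<^sub>F M in sequentially. (1 - e M)^2 * A M - 2 * r M * B M \<le> X M \<and>
      X M \<le> A M - 2 * r M * (1 - e M)^2 * B M"
    and s: "\<forall>\<^sub>F M in sequentially. 0 < s M"
    and A: "(\<lambda>M. A M / s M) \<longlonglongrightarrow> \<alpha>" and B: "(\<lambda>M. B M / s M) \<longlonglongrightarrow> \<beta>"
    and e: "e \<longlonglongrightarrow> 0" and r: "r \<longlonglongrightarrow> \<gamma>"
  shows "(\<lambda>M. X M / s M) \<longlonglongrightarrow> \<alpha> - 2 * \<gamma> * \<beta>"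
proof (rule tendsto_sandwich)
  show "\<forall>\<^sub>F M in sequentially. (1 - e M)^2 * (A M / s M) - 2 * r M * (B M / s M) \<le> X M / s M"
    using bounds s
  proof eventually_elim
    case (elim M)
    then have "((1 - e M)^2 * A M - 2 * r M * B M) / s M \<le> X M / s M"
      by (simp add: divide_right_mono)
    then show ?case by (simp add: diff_divide_distrib)
  qed
  show "\<forall>\<^sub>F M in sequentially. X M / s M \<le> A M / s M - 2 * r M * (1 - e M)^2 * (B M / s M)"
    using bounds s
  proof eventually_elim
    case (elim M)
    then have "X M / s M \<le> (A M - 2 * r M * (1 - e M)^2 * B M) / s M"
      by (simp add: divide_right_mono)
    then show ?case by (simp add: diff_divide_distrib)
  qed
  have "(\<lambda>M. (1 - e M)^2 * (A M / s M) - 2 * r M * (B M / s M))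
      \<longlonglongrightarrow> (1 - 0)^2 * \<alpha> - 2 * \<gamma> * \<beta>"
    by (intro tendsto_intros A B e r)
  then show "(\<lambda>M. (1 - e M)^2 * (A M / s M) - 2 * r M * (B M / s M)) \<longlonglongrightarrow> \<alpha> - 2 * \<gamma> * \<beta>"
    by simp
  have "(\<lambda>M. A M / s M - 2 * r M * (1 - e M)^2 * (B M / s M))
      \<longlonglongrightarrow> \<alpha> - 2 * \<gamma> * (1 - 0)^2 * \<beta>"
    by (intro tendsto_intros A B e r)
  then show "(\<lambda>M. A M / s M - 2 * r M * (1 - e M)^2 * (B M / s M)) \<longlonglongrightarrow> \<alpha> - 2 * \<gamma> * \<beta>"
    by simp
qed

lemma energy_forms_asymptotics:
  fixes \<rho> :: real and \<theta> :: "nat \<Rightarrow> real"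
  assumes \<theta>: "\<forall>\<^sub>F M in sequentially. 0 < \<theta> M \<and> \<theta> M < pi"
    and lim: "(\<lambda>M. real M * min (\<theta> M) (pi - \<theta> M)) \<longlonglongrightarrow> 0"
  shows "(\<lambda>M. (\<Sum>k<M. numer_form \<rho> (\<theta> M) k) / real M ^ 3) \<longlonglongrightarrow> 2 * (1 - \<rho>^2) / 3"
    and "(\<lambda>M. denom_form \<rho> (\<theta> M) M / real M ^ 2) \<longlonglongrightarrow> 1 - \<rho>^2"
proof -
  define t where "t M = min (\<theta> M) (pi - \<theta> M)" for M
  have reflect: "numer_form \<rho> (t M) k = numer_form \<rho> (\<theta> M) k"
      "denom_form \<rho> (t M) M = denom_form \<rho> (\<theta> M) M" for M k
    by (simp_all add: t_def min_def numer_form_pi_minus denom_form_pi_minus)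
  have Mt: "(\<lambda>M. real M * t M) \<longlonglongrightarrow> 0" using lim by (simp add: t_def)
  have small: "\<forall>\<^sub>F M in sequentially. 0 < M \<and> 0 < t M \<and> t M \<le> pi/2 \<and> real M * t M \<le> 1"
    using \<theta> eventually_gt_at_top[of 0] order_tendstoD(2)[OF Mt zero_less_one]
    by eventually_elim (auto simp: t_def min_def)
  have "t \<longlonglongrightarrow> 0"
  proof (rule tendsto_sandwich[of "\<lambda>_. 0" _ _ "\<lambda>M. real M * t M"])
    show "\<forall>\<^sub>F M in sequentially. t M \<le> real M * t M"
      using small by eventually_elim (auto intro: mult_right_mono[of 1, simplified])
  qed (use small Mt in \<open>auto elim: eventually_mono\<close>)
  then have r: "(\<lambda>M. \<rho>^2 * cos (t M)) \<longlonglongrightarrow> \<rho>^2"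
    using tendsto_mult_left[OF tendsto_cos, of t 0 sequentially "\<rho>^2"] by simp
  have e: "(\<lambda>M. (real M * t M)^2 / 6) \<longlonglongrightarrow> 0"
    using tendsto_divide[OF tendsto_power[OF Mt, of 2] tendsto_const[of 6]] by simp
  have "(\<lambda>M. (\<Sum>k<M. numer_form \<rho> (t M) k) / real M ^ 3) \<longlonglongrightarrow> 2/3 - 2 * \<rho>^2 * (1/3)"
  proof (rule tendsto_perturbed_form[OF _ _ _ _ e r])
    show "\<forall>\<^sub>F M in sequentially. 0 < real M ^ 3"
      using small by eventually_elim simp
    show "\<forall>\<^sub>F M in sequentially.
        (1 - (real M * t M)^2 / 6)^2 * (real M * (2 * (real M)^2 + 1) / 3)
          - 2 * (\<rho>^2 * cos (t M)) * ((real M - 1) * real M * (real M + 1) / 3)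
          \<le> (\<Sum>k<M. numer_form \<rho> (t M) k) \<and>
        (\<Sum>k<M. numer_form \<rho> (t M) k) \<le> real M * (2 * (real M)^2 + 1) / 3
          - 2 * (\<rho>^2 * cos (t M)) * (1 - (real M * t M)^2 / 6)^2 * ((real M - 1) * real M * (real M + 1) / 3)"
      using small by eventually_elim (intro conjI numer_form_sum_bounds; simp)
  qed real_asymp+
  then show "(\<lambda>M. (\<Sum>k<M. numer_form \<rho> (\<theta> M) k) / real M ^ 3) \<longlonglongrightarrow> 2 * (1 - \<rho>^2) / 3"
    by (simp add: reflect field_simps)
  have "(\<lambda>M. denom_form \<rho> (t M) M / real M ^ 2) \<longlonglongrightarrow> 1 + \<rho>^2 - 2 * \<rho>^2 * 1"
  proof (rule tendsto_perturbed_form[OF _ _ _ _ e r])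
    show "\<forall>\<^sub>F M in sequentially. 0 < real M ^ 2"
      using small by eventually_elim simp
    show "\<forall>\<^sub>F M in sequentially.
        (1 - (real M * t M)^2 / 6)^2 * ((real M)^2 + \<rho>^2 * (real M - 1)^2)
          - 2 * (\<rho>^2 * cos (t M)) * (real M * (real M - 1)) \<le> denom_form \<rho> (t M) M \<and>
        denom_form \<rho> (t M) M \<le> (real M)^2 + \<rho>^2 * (real M - 1)^2
          - 2 * (\<rho>^2 * cos (t M)) * (1 - (real M * t M)^2 / 6)^2 * (real M * (real M - 1))"
      using small by eventually_elim (intro conjI denom_form_bounds; simp)
  qed real_asymp+
  then show "(\<lambda>M. denom_form \<rho> (\<theta> M) M / real M ^ 2) \<longlonglongrightarrow> 1 - \<rho>^2"
    by (simp add: reflect)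
qed

theorem mainTheorem11:
  fixes C :: "complex^2^2" and sq :: complex
    and \<omega> :: "nat \<Rightarrow> complex" and \<theta> :: "nat \<Rightarrow> real"
  assumes unitary: "unitary2 C"
    and sqrt: "sq\<^sup>2 = det C"
    and nonzero: "C$1$1 * C$1$2 * C$2$1 * C$2$2 \<noteq> 0"
    and inB: "\<And>M. M \<ge> 1 \<Longrightarrow> \<omega> M \<in> B_in C"
    and theta_range: "\<And>M. M \<ge> 1 \<Longrightarrow> 0 < \<theta> M \<and> \<theta> M < pi"
    and theta_cos: "\<And>M. M \<ge> 1 \<Longrightarrow> complex_of_real (cos (\<theta> M)) = xfun C (\<omega> M)"
    and lim0: "(\<lambda>M. real M * min (\<theta> M) (pi - \<theta> M)) \<longlonglongrightarrow> 0"
  shows "(\<lambda>M. energy C sq M (\<omega> M) / real M) \<longlonglongrightarrow> 2 / 3"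
proof -
  define \<rho> where "\<rho> = cmod (C$1$1)"
  have "\<rho>^2 < 1"
    using unitary2_norm_entries(2)[OF unitary] nonzero by (simp add: \<rho>_def abs_square_less_1)
  then have \<rho>: "1 - \<rho>^2 \<noteq> 0" "0 < 1 - \<rho>^2" by simp_all
  then have limit: "(2 * (1 - \<rho>^2) / 3) / (1 - \<rho>^2) = 2 / 3" by (simp add: field_simps)
  have "\<forall>\<^sub>F M in sequentially. 0 < \<theta> M \<and> \<theta> M < pi"
    using eventually_ge_at_top[of 1] by eventually_elim (rule theta_range)
  note limits = energy_forms_asymptotics[OF this lim0, of \<rho>]
  have "(\<lambda>M. ((\<Sum>k<M. numer_form \<rho> (\<theta> M) k) / real M ^ 3) / (denom_form \<rho> (\<theta> M) M / real M ^ 2))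
      \<longlonglongrightarrow> 2 / 3"
    using tendsto_divide[OF limits \<rho>(1)] unfolding limit .
  moreover have "\<forall>\<^sub>F M in sequentially.
      ((\<Sum>k<M. numer_form \<rho> (\<theta> M) k) / real M ^ 3) / (denom_form \<rho> (\<theta> M) M / real M ^ 2)
        = energy C sq M (\<omega> M) / real M"
    using order_tendstoD(1)[OF limits(2) \<rho>(2)] eventually_ge_at_top[of 1]
  proof eventually_elim
    case (elim M)
    then have "0 < denom_form \<rho> (\<theta> M) M" by (simp add: zero_less_divide_iff)
    then have "energy C sq M (\<omega> M) = (\<Sum>k<M. numer_form \<rho> (\<theta> M) k) / denom_form \<rho> (\<theta> M) M"
      unfolding \<rho>_def using elim inB theta_range theta_cos
      by (intro energy_formula[OF unitary sqrt nonzero]) (auto simp: B_in_def)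
    then show ?case using elim by (simp add: field_simps power3_eq_cube power2_eq_square)
  qed
  ultimately show ?thesis by (rule Lim_transform_eventually)
qed

end
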